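(* Let $n\ge 1$ and $P\ge 1$ be integers, and set $l_n=\frac{3\cdot 2^{n-1}-1}{2}$. For real $x$ define $$S_n(x)=\sum_{l=2^{n-1}}^{2^{n}-1}\frac{1}{x-(2l-1)\pi i}.$$ Then for every real $x$, $$\left|\,S_n(x)-\sum_{l=2^{n-1}}^{2^{n}-1}\frac{1}{x-(2l_n-1)\pi i}\sum_{\nu=0}^{P-1}\left(\frac{2(l-l_n)\pi i}{x-(2l_n-1)\pi i}\right)^{\nu}\right|\le \frac{1}{2\pi}\cdot\frac{1}{3^{P}}.$$
   Context: Here $i$ denotes the imaginary unit. The sums $S_n$ are the dyadic groups of the pole expansion $\sum_{l\ge1}\frac{1}{x-(2l-1)\pi i}$ of the Fermi–Dirac function: the $n$-th group collects the poles $(2l-1)\pi i$ with $2^{n-1}\le l\le 2^n-1$, and $l_n$ is the midpoint of the index range $[2^{n-1},2^n-1]$. The subtracted double sum is the truncation after $P$ terms of the geometric-series (multipole) expansion of each term of $S_n$ about the pole $(2l_n-1)\pi i$. *)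

theory Defs
  imports "HOL-Analysis.Analysis"
begin

text \<open>Midpoint of the index range [2^(n-1), 2^n - 1] (a half-integer for n \<ge> 2).\<close>
definition lmid :: "nat \<Rightarrow> real" where
  "lmid n = (3 * 2 ^ (n - 1) - 1) / 2"

text \<open>Dyadic group of the pole expansion of the Fermi-Dirac function.\<close>
definition S_grp :: "nat \<Rightarrow> real \<Rightarrow> complex" where
  "S_grp n x = (\<Sum>l = 2 ^ (n - 1)..2 ^ n - 1.
      1 / (complex_of_real x - (2 * of_nat l - 1) * complex_of_real pi * \<i>))"

end

theory Submission imports Defs begin

text \<open>Write the block as a sum over l from m = 2^(n-1) to 2m-1. Each term 1/(x - (2l-1)\<pi>i)
  is a geometric series in q_l = 2(l - l_n)\<pi>i/(x - (2l_n-1)\<pi>i) with |q_l| \<le> (m-1)/(3m-2) \<le> 1/3,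
  and its truncation error is q_l^P/(x - (2l-1)\<pi>i). Summing the bounds
  |q_l|^P/((2l-1)\<pi>) leaves the elementary estimate
  (m-1)/(3m-2) \<cdot> \<Sum> 1/(2l-1) \<le> 1/6, the sum being decreasing in m.\<close>

lemma geometric_truncation_error:
  fixes C q :: complex
  assumes "C \<noteq> 0" "q \<noteq> 1"
  shows "1 / (C - q * C) - 1 / C * (\<Sum>\<nu><P. q ^ \<nu>) = q ^ P / (C - q * C)"
proof -
  have "C - q * C = C * (1 - q)" by (simp add: algebra_simps)
  moreover have "1 - q \<noteq> 0" using assms by simp
  ultimately show ?thesis using assms by (simp add: sum_gp_strict field_simps)
qed

lemma cmod_real_minus_imag_ge: "\<bar>b\<bar> \<le> cmod (complex_of_real x - complex_of_real b * \<i>)"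
  using abs_Im_le_cmod[of "complex_of_real x - complex_of_real b * \<i>"] by simp

lemma multipole_truncation_error_bound:
  fixes x a b :: real
  assumes "a \<noteq> 0" "b \<noteq> 0"
  defines "D \<equiv> complex_of_real x - complex_of_real b * \<i>"
  shows "cmod (1 / (complex_of_real x - complex_of_real a * \<i>)
               - 1 / D * (\<Sum>\<nu><P. (complex_of_real (a - b) * \<i> / D) ^ \<nu>))
         \<le> (\<bar>a - b\<bar> / \<bar>b\<bar>) ^ P / \<bar>a\<bar>"
proof -
  define q where "q = complex_of_real (a - b) * \<i> / D"
  define A where "A = complex_of_real x - complex_of_real a * \<i>"
  have D: "\<bar>b\<bar> \<le> cmod D" and A: "\<bar>a\<bar> \<le> cmod A"
    unfolding D_def A_def by (rule cmod_real_minus_imag_ge)+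
  with assms(1,2) have "D \<noteq> 0" "A \<noteq> 0" by auto
  have "q * D = complex_of_real (a - b) * \<i>" using \<open>D \<noteq> 0\<close> by (simp add: q_def)
  then have A_eq: "A = D - q * D" unfolding A_def D_def by (simp add: algebra_simps)
  with \<open>A \<noteq> 0\<close> have "q \<noteq> 1" by auto
  have "cmod q \<le> \<bar>a - b\<bar> / \<bar>b\<bar>"
    unfolding q_def norm_divide norm_mult norm_of_real norm_ii
    by (rule frac_le) (use D assms(2) in auto)
  then have bound: "cmod (q ^ P / A) \<le> (\<bar>a - b\<bar> / \<bar>b\<bar>) ^ P / \<bar>a\<bar>"
    unfolding norm_divide norm_power
    by (intro frac_le power_mono) (use A assms(1) in auto)
  have "1 / A - 1 / D * (\<Sum>\<nu><P. q ^ \<nu>) = q ^ P / A"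
    unfolding A_eq by (rule geometric_truncation_error[OF \<open>D \<noteq> 0\<close> \<open>q \<noteq> 1\<close>])
  with bound show ?thesis
    unfolding A_def[symmetric] q_def[symmetric] by simp
qed

definition odd_reciprocal_sum :: "nat \<Rightarrow> real" where
  "odd_reciprocal_sum m = (\<Sum>l\<in>{m..<2*m}. 1 / (2 * real l - 1))"

lemma odd_reciprocal_sum_nonneg: "0 \<le> odd_reciprocal_sum m"
  unfolding odd_reciprocal_sum_def by (intro sum_nonneg) auto

lemma odd_reciprocal_sum_Suc:
  assumes "m \<ge> 1"
  shows "odd_reciprocal_sum (Suc m)
           = odd_reciprocal_sum m - 1 / (2 * real m - 1) + 1 / (4 * real m - 1) + 1 / (4 * real m + 1)"
proof -
  let ?f = "\<lambda>l::nat. 1 / (2 * real l - 1)"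
  have "{m..<2 * Suc m} = insert m {Suc m..<2 * Suc m}" using assms by auto
  then have "sum ?f {m..<2 * Suc m} = ?f m + odd_reciprocal_sum (Suc m)"
    unfolding odd_reciprocal_sum_def by simp
  moreover have "{m..<2 * Suc m} = insert (2 * m + 1) (insert (2 * m) {m..<2 * m})" by auto
  then have "sum ?f {m..<2 * Suc m} = 1 / (4 * real m + 1) + 1 / (4 * real m - 1) + odd_reciprocal_sum m"
    unfolding odd_reciprocal_sum_def by (simp add: algebra_simps)
  ultimately show ?thesis by simp
qed

lemma odd_reciprocal_sum_Suc_le:
  assumes "m \<ge> 1"
  shows "odd_reciprocal_sum (Suc m) \<le> odd_reciprocal_sum m"
proof -
  have pos: "2 * real m - 1 > 0" "4 * real m - 1 > 0" using assms by auto
  have "1 / (4 * real m - 1) + 1 / (4 * real m + 1) = 8 * real m / ((4 * real m - 1) * (4 * real m + 1))"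
    using pos by (simp add: field_simps)
  also have "\<dots> \<le> 1 / (2 * real m - 1)"
  proof -
    have "8 * real m * (2 * real m - 1) \<le> (4 * real m - 1) * (4 * real m + 1)"
      using assms by (simp add: algebra_simps)
    then show ?thesis using pos by (simp add: divide_simps)
  qed
  finally show ?thesis using odd_reciprocal_sum_Suc[OF assms] by simp
qed

lemma odd_reciprocal_sum_le_half:
  assumes "m \<ge> 3"
  shows "odd_reciprocal_sum m \<le> 1 / 2"
  using assms
proof (induction m rule: dec_induct)
  case base
  have "{3..<2*3} = {3, 4, 5::nat}" by auto
  then show ?case unfolding odd_reciprocal_sum_def by simp
next
  case (step k)
  then show ?case using odd_reciprocal_sum_Suc_le[of k] by simp
qed

lemma odd_reciprocal_sum_weighted_le:
  assumes "m \<ge> 1"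
  shows "3 * ((real m - 1) / (3 * real m - 2)) * odd_reciprocal_sum m \<le> 1 / 2"
proof -
  consider "m = 1" | "m = 2" | "m \<ge> 3" using assms by linarith
  then show ?thesis
  proof cases
    case 2
    have "{2..<2*2} = {2, 3::nat}" by auto
    then show ?thesis using 2 unfolding odd_reciprocal_sum_def by simp
  next
    case 3
    have "0 \<le> 3 * ((real m - 1) / (3 * real m - 2))" "3 * ((real m - 1) / (3 * real m - 2)) \<le> 1"
      using 3 by (auto simp: field_simps)
    then show ?thesis
      using mult_mono[OF _ odd_reciprocal_sum_le_half[OF 3]] odd_reciprocal_sum_nonneg
      by fastforce
  qed simp
qed

lemma power_le_third_power:
  fixes \<rho> :: real
  assumes "0 \<le> \<rho>" "3 * \<rho> \<le> 1" "P \<ge> 1"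
  shows "\<rho> ^ P \<le> 3 * \<rho> / 3 ^ P"
proof -
  have "(3 * \<rho>) ^ P \<le> 3 * \<rho>" using power_decreasing[of 1 P "3 * \<rho>"] assms by simp
  then show ?thesis by (simp add: power_mult_distrib field_simps)
qed

lemma dyadic_block_multipole_error:
  fixes m P :: nat and x c :: real
  assumes "m \<ge> 1" "P \<ge> 1" and c: "2 * c = 3 * real m - 1"
  defines "D \<equiv> complex_of_real x - complex_of_real ((2 * c - 1) * pi) * \<i>"
  shows "cmod (\<Sum>l\<in>{m..<2*m}.
            1 / (complex_of_real x - complex_of_real ((2 * real l - 1) * pi) * \<i>)
            - 1 / D * (\<Sum>\<nu><P. (complex_of_real ((2 * real l - 1) * pi - (2 * c - 1) * pi) * \<i> / D) ^ \<nu>))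
         \<le> 1 / (2 * pi) * (1 / 3 ^ P)"
proof -
  define \<rho> where "\<rho> = (real m - 1) / (3 * real m - 2)"
  have \<rho>: "0 \<le> \<rho>" "3 * \<rho> \<le> 1" unfolding \<rho>_def using assms(1) by (auto simp: field_simps)
  have term_bound: "(\<bar>(2 * real l - 1) * pi - (2 * c - 1) * pi\<bar> / \<bar>(2 * c - 1) * pi\<bar>) ^ P
                      / \<bar>(2 * real l - 1) * pi\<bar> \<le> \<rho> ^ P / pi * (1 / (2 * real l - 1))"
    if l: "l \<in> {m..<2*m}" for l
  proof -
    have "(2 * real l - 1) * pi - (2 * c - 1) * pi = 2 * (real l - c) * pi"
      by (simp add: algebra_simps)
    then have "\<bar>(2 * real l - 1) * pi - (2 * c - 1) * pi\<bar> = \<bar>2 * (real l - c)\<bar> * pi"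
      by (simp add: abs_mult)
    also have "\<dots> \<le> (real m - 1) * pi" using l c by (simp add: abs_le_iff)
    finally have "\<bar>(2 * real l - 1) * pi - (2 * c - 1) * pi\<bar> / \<bar>(2 * c - 1) * pi\<bar> \<le> \<rho>"
      using c assms(1) unfolding \<rho>_def by (simp add: abs_mult divide_simps)
    then have "(\<bar>(2 * real l - 1) * pi - (2 * c - 1) * pi\<bar> / \<bar>(2 * c - 1) * pi\<bar>) ^ P \<le> \<rho> ^ P"
      by (intro power_mono) auto
    moreover have "\<bar>(2 * real l - 1) * pi\<bar> = (2 * real l - 1) * pi" using l assms(1) by simp
    ultimately show ?thesis
      using l assms(1) \<rho> by (simp add: frac_le)
  qed
  have "cmod (\<Sum>l\<in>{m..<2*m}.
            1 / (complex_of_real x - complex_of_real ((2 * real l - 1) * pi) * \<i>)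
            - 1 / D * (\<Sum>\<nu><P. (complex_of_real ((2 * real l - 1) * pi - (2 * c - 1) * pi) * \<i> / D) ^ \<nu>))
        \<le> (\<Sum>l\<in>{m..<2*m}. \<rho> ^ P / pi * (1 / (2 * real l - 1)))"
    unfolding D_def
    by (intro order.trans[OF norm_sum sum_mono] order.trans[OF multipole_truncation_error_bound term_bound])
       (use assms(1) c in auto)
  also have "\<dots> = \<rho> ^ P / pi * odd_reciprocal_sum m"
    unfolding odd_reciprocal_sum_def sum_distrib_left ..
  also have "\<dots> \<le> 3 * \<rho> / 3 ^ P / pi * odd_reciprocal_sum m"
    using power_le_third_power[OF \<rho> assms(2)] odd_reciprocal_sum_nonneg
    by (intro mult_right_mono divide_right_mono) auto
  also have "\<dots> = (3 * \<rho> * odd_reciprocal_sum m) / (pi * 3 ^ P)" by simp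
  also have "\<dots> \<le> (1 / 2) / (pi * 3 ^ P)"
    using odd_reciprocal_sum_weighted_le[OF assms(1)] unfolding \<rho>_def
    by (intro divide_right_mono) auto
  finally show ?thesis by simp
qed

theorem mainTheorem1:
  fixes n P :: nat and x :: real
  assumes "n \<ge> 1" and "P \<ge> 1"
  shows "cmod (S_grp n x
     - (\<Sum>l = 2 ^ (n - 1)..2 ^ n - 1.
          1 / (complex_of_real x - (2 * complex_of_real (lmid n) - 1) * complex_of_real pi * \<i>)
          * (\<Sum>\<nu> < P. ((2 * (of_nat l - complex_of_real (lmid n)) * complex_of_real pi * \<i>)
               / (complex_of_real x - (2 * complex_of_real (lmid n) - 1) * complex_of_real pi * \<i>)) ^ \<nu>)))
   \<le> 1 / (2 * pi) * (1 / 3 ^ P)"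
proof -
  define m :: nat where "m = 2 ^ (n - 1)"
  have "m \<ge> 1" unfolding m_def by simp
  have "2 ^ n = 2 * m" unfolding m_def using assms(1) by (cases n) auto
  then have range: "{2 ^ (n - 1)..2 ^ n - 1} = {m..<2*m}"
    using \<open>m \<ge> 1\<close> unfolding m_def[symmetric] by auto
  have c: "2 * lmid n = 3 * real m - 1" unfolding lmid_def m_def by simp
  show ?thesis
    using dyadic_block_multipole_error[OF \<open>m \<ge> 1\<close> assms(2) c, of x]
    unfolding S_grp_def range sum_subtractf[symmetric]
    by (simp add: algebra_simps)
qed

end
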